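(* For any $n\in\mathbb{N}$, the monoids $\mathrm{rps}_n$ and $\mathrm{lps}_n$ have word problem solvable in quadratic time.
   Context: Let $\mathcal{A}_n=\{1<2<\cdots<n\}$. An lPS tableau is a finite (possibly empty) sequence of nonempty bottom-justified columns of boxes filled with positive integers, such that the entries of each column are strictly decreasing from top to bottom and the bottom entries of the columns form a weakly increasing sequence from left to right. An rPS tableau is defined in the same way but with columns weakly decreasing from top to bottom and the bottom row strictly increasing from left to right. Right insertion of a symbol $a$ into an lPS tableau $B$: if $a$ is greater than or equal to every entry of the bottom row, append a new column consisting of $a$ at the right end; otherwise, let $z$ be the leftmost bottom-row entry with $z>a$ and put $a$ in a new box at the bottom of the column of $z$ (the previous entries of that column move up one box). Right insertion into an rPS tableau is the same except that a new column is created iff $a$ is strictly greater than every bottom-row entry, and otherwise $z$ is the leftmost bottom-row entry with $z\geq a$. For $w=w_1\cdots w_k$, $\mathfrak{R}_\ell(w)$ (resp. $\mathfrak{R}_r(w)$) is obtained by starting with the empty lPS (resp. rPS) tableau and right-inserting $w_1,\dots,w_k$ in order. The monoid $\mathrm{lps}_n$ (resp. $\mathrm{rps}_n$) is the quotient of $\mathcal{A}_n^*$ by the congruence $u\equiv v\iff\mathfrak{R}_\ell(u)=\mathfrak{R}_\ell(v)$ (resp. $\mathfrak{R}_r(u)=\mathfrak{R}_r(v)$). The word problem (with respect to the generating set $\mathcal{A}_n$) asks, given $u,v\in\mathcal{A}_n^*$, whether they represent the same element; time is measured in $|u|+|v|$. *)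

theory Defs
  imports Main
begin

text \<open>A PS tableau is represented as the list of its columns from left to right;
  each column is a list of its entries read from the BOTTOM box upwards
  (so the head of each column is its bottom-row entry).\<close>

type_synonym tableau = "nat list list"

definition word_over :: "nat \<Rightarrow> nat list \<Rightarrow> bool" where
  "word_over n w \<longleftrightarrow> set w \<subseteq> {1..n}"

text \<open>Right insertion into an lPS tableau: put a at the bottom of the leftmost
  column whose bottom entry z satisfies z > a; otherwise create a new column at
  the right end. (The clause for an empty column never occurs for tableaux.)\<close>

fun ins_l :: "nat \<Rightarrow> tableau \<Rightarrow> tableau" where
  "ins_l a [] = [[a]]"
| "ins_l a ([] # cs) = [] # ins_l a cs"
| "ins_l a ((z # zs) # cs) = (if a < z then (a # z # zs) # cs else (z # zs) # ins_l a cs)"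

fun ins_r :: "nat \<Rightarrow> tableau \<Rightarrow> tableau" where
  "ins_r a [] = [[a]]"
| "ins_r a ([] # cs) = [] # ins_r a cs"
| "ins_r a ((z # zs) # cs) = (if a \<le> z then (a # z # zs) # cs else (z # zs) # ins_r a cs)"

fun ins_word_l :: "nat list \<Rightarrow> tableau \<Rightarrow> tableau" where
  "ins_word_l [] t = t"
| "ins_word_l (a # w) t = ins_word_l w (ins_l a t)"

fun ins_word_r :: "nat list \<Rightarrow> tableau \<Rightarrow> tableau" where
  "ins_word_r [] t = t"
| "ins_word_r (a # w) t = ins_word_r w (ins_r a t)"

definition R_l :: "nat list \<Rightarrow> tableau" where
  "R_l w = ins_word_l w []"

definition R_r :: "nat list \<Rightarrow> tableau" where
  "R_r w = ins_word_r w []"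

definition lps_eq :: "nat \<Rightarrow> nat list \<Rightarrow> nat list \<Rightarrow> bool" where
  "lps_eq n u v \<longleftrightarrow> word_over n u \<and> word_over n v \<and> R_l u = R_l v"

definition rps_eq :: "nat \<Rightarrow> nat list \<Rightarrow> nat list \<Rightarrow> bool" where
  "rps_eq n u v \<longleftrightarrow> word_over n u \<and> word_over n v \<and> R_r u = R_r v"

fun eq_col :: "nat list \<Rightarrow> nat list \<Rightarrow> bool" where
  "eq_col [] [] = True"
| "eq_col (x # xs) (y # ys) = (if x = y then eq_col xs ys else False)"
| "eq_col _ _ = False"

fun eq_tab :: "tableau \<Rightarrow> tableau \<Rightarrow> bool" where
  "eq_tab [] [] = True"
| "eq_tab (c # cs) (d # ds) = (if eq_col c d then eq_tab cs ds else False)"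
| "eq_tab _ _ = False"

fun decide_l :: "nat list \<Rightarrow> nat list \<Rightarrow> bool" where
  "decide_l u v = eq_tab (ins_word_l u []) (ins_word_l v [])"

fun decide_r :: "nat list \<Rightarrow> nat list \<Rightarrow> bool" where
  "decide_r u v = eq_tab (ins_word_r u []) (ins_word_r v [])"

text \<open>Running-time functions, written by hand following the convention of
  HOL-Library's time_fun command: every call of a defined function costs 1 plus
  the cost of the defined functions it calls; constructors and comparisons of
  letters are free (constant-cost primitives).\<close>

fun T_ins_l :: "nat \<Rightarrow> tableau \<Rightarrow> nat" where
  "T_ins_l a [] = 1"
| "T_ins_l a ([] # cs) = T_ins_l a cs + 1"
| "T_ins_l a ((z # zs) # cs) = (if a < z then 0 else T_ins_l a cs) + 1"

fun T_ins_r :: "nat \<Rightarrow> tableau \<Rightarrow> nat" where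
  "T_ins_r a [] = 1"
| "T_ins_r a ([] # cs) = T_ins_r a cs + 1"
| "T_ins_r a ((z # zs) # cs) = (if a \<le> z then 0 else T_ins_r a cs) + 1"

fun T_ins_word_l :: "nat list \<Rightarrow> tableau \<Rightarrow> nat" where
  "T_ins_word_l [] t = 1"
| "T_ins_word_l (a # w) t = T_ins_l a t + T_ins_word_l w (ins_l a t) + 1"

fun T_ins_word_r :: "nat list \<Rightarrow> tableau \<Rightarrow> nat" where
  "T_ins_word_r [] t = 1"
| "T_ins_word_r (a # w) t = T_ins_r a t + T_ins_word_r w (ins_r a t) + 1"

fun T_eq_col :: "nat list \<Rightarrow> nat list \<Rightarrow> nat" where
  "T_eq_col [] [] = 1"
| "T_eq_col (x # xs) (y # ys) = (if x = y then T_eq_col xs ys else 0) + 1"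
| "T_eq_col _ _ = 1"

fun T_eq_tab :: "tableau \<Rightarrow> tableau \<Rightarrow> nat" where
  "T_eq_tab [] [] = 1"
| "T_eq_tab (c # cs) (d # ds) =
     T_eq_col c d + (if eq_col c d then T_eq_tab cs ds else 0) + 1"
| "T_eq_tab _ _ = 1"

fun T_decide_l :: "nat list \<Rightarrow> nat list \<Rightarrow> nat" where
  "T_decide_l u v = T_ins_word_l u [] + T_ins_word_l v []
     + T_eq_tab (ins_word_l u []) (ins_word_l v []) + 1"

fun T_decide_r :: "nat list \<Rightarrow> nat list \<Rightarrow> nat" where
  "T_decide_r u v = T_ins_word_r u [] + T_ins_word_r v []
     + T_eq_tab (ins_word_r u []) (ins_word_r v []) + 1"

end

theory Submission
  imports Defs
begin

text \<open>Each insertion scans at most the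
  columns of the current tableau, and a tableau built from a word of length \<open>k\<close> has at most
  \<open>k\<close> columns and exactly \<open>k\<close> boxes; hence building costs \<open>O(k\<^sup>2)\<close> and comparing costs \<open>O(k)\<close>.\<close>

definition boxes :: "tableau \<Rightarrow> nat" where
  "boxes t = sum_list (map length t)"

lemma boxes_Nil [simp]: "boxes [] = 0"
  by (simp add: boxes_def)

lemma eq_col_iff: "eq_col c d \<longleftrightarrow> c = d"
  by (induction c d rule: eq_col.induct) auto

lemma eq_tab_iff: "eq_tab t s \<longleftrightarrow> t = s"
  by (induction t s rule: eq_tab.induct) (auto simp: eq_col_iff)

lemma T_eq_col_le: "T_eq_col c d \<le> length c + 1"
  by (induction c d rule: T_eq_col.induct) auto

lemma T_eq_tab_le: "T_eq_tab t s \<le> boxes t + 2 * length t + 1"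
proof (induction t s rule: T_eq_tab.induct)
  case (2 c cs d ds)
  then show ?case using T_eq_col_le[of c d] by (auto simp: boxes_def)
qed auto

lemma T_ins_l_le: "T_ins_l a t \<le> length t + 1"
  by (induction a t rule: T_ins_l.induct) auto

lemma T_ins_r_le: "T_ins_r a t \<le> length t + 1"
  by (induction a t rule: T_ins_r.induct) auto

lemma length_ins_l_le: "length (ins_l a t) \<le> length t + 1"
  by (induction a t rule: ins_l.induct) auto

lemma length_ins_r_le: "length (ins_r a t) \<le> length t + 1"
  by (induction a t rule: ins_r.induct) auto

lemma boxes_ins_l [simp]: "boxes (ins_l a t) = boxes t + 1"
  by (induction a t rule: ins_l.induct) (auto simp: boxes_def)

lemma boxes_ins_r [simp]: "boxes (ins_r a t) = boxes t + 1"
  by (induction a t rule: ins_r.induct) (auto simp: boxes_def)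

lemma length_ins_word_l_le: "length (ins_word_l w t) \<le> length t + length w"
proof (induction w arbitrary: t)
  case (Cons a w)
  have "length (ins_word_l w (ins_l a t)) \<le> length (ins_l a t) + length w"
    by (rule Cons.IH)
  then show ?case using length_ins_l_le[of a t] by simp
qed simp

lemma length_ins_word_r_le: "length (ins_word_r w t) \<le> length t + length w"
proof (induction w arbitrary: t)
  case (Cons a w)
  have "length (ins_word_r w (ins_r a t)) \<le> length (ins_r a t) + length w"
    by (rule Cons.IH)
  then show ?case using length_ins_r_le[of a t] by simp
qed simp

lemma boxes_ins_word_l: "boxes (ins_word_l w t) = boxes t + length w"
  by (induction w arbitrary: t) auto

lemma boxes_ins_word_r: "boxes (ins_word_r w t) = boxes t + length w"
  by (induction w arbitrary: t) auto

lemma T_ins_word_l_le: "T_ins_word_l w t \<le> length w * (length t + length w + 2) + 1"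
proof (induction w arbitrary: t)
  case (Cons a w)
  have "T_ins_word_l w (ins_l a t) \<le> length w * (length (ins_l a t) + length w + 2) + 1"
    by (rule Cons.IH)
  also have "\<dots> \<le> length w * (length t + length w + 3) + 1"
    using length_ins_l_le[of a t] by (intro add_right_mono mult_le_mono2) simp
  finally show ?case using T_ins_l_le[of a t] by (simp add: algebra_simps)
qed simp

lemma T_ins_word_r_le: "T_ins_word_r w t \<le> length w * (length t + length w + 2) + 1"
proof (induction w arbitrary: t)
  case (Cons a w)
  have "T_ins_word_r w (ins_r a t) \<le> length w * (length (ins_r a t) + length w + 2) + 1"
    by (rule Cons.IH)
  also have "\<dots> \<le> length w * (length t + length w + 3) + 1"
    using length_ins_r_le[of a t] by (intro add_right_mono mult_le_mono2) simp
  finally show ?case using T_ins_r_le[of a t] by (simp add: algebra_simps)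
qed simp

lemma decide_cost_bound:
  fixes x y :: nat
  assumes "A \<le> (x + 1)\<^sup>2" and "B \<le> (y + 1)\<^sup>2" and "C \<le> 3 * x + 1"
  shows "A + B + C + 1 \<le> 10 * (x + y)\<^sup>2 + 10"
proof -
  have "A + B + C + 1 \<le> x * x + y * y + 5 * x + 2 * y + 4"
    using assms by (simp add: power2_eq_square algebra_simps)
  also have "\<dots> \<le> 10 * (x * x) + 10 * (y * y) + 10"
    using le_square[of x] le_square[of y] by linarith
  also have "\<dots> \<le> 10 * (x + y)\<^sup>2 + 10"
    by (simp add: power2_eq_square algebra_simps)
  finally show ?thesis .
qed

lemma T_decide_l_le: "T_decide_l u v \<le> 10 * (length u + length v)\<^sup>2 + 10"
proof -
  have "T_ins_word_l w [] \<le> (length w + 1)\<^sup>2" for w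
    using T_ins_word_l_le[of w "[]"] by (simp add: power2_eq_square algebra_simps)
  moreover have "T_eq_tab (ins_word_l u []) (ins_word_l v []) \<le> 3 * length u + 1"
    using T_eq_tab_le[of "ins_word_l u []" "ins_word_l v []"] boxes_ins_word_l[of u "[]"]
      length_ins_word_l_le[of u "[]"] by simp
  ultimately show ?thesis unfolding T_decide_l.simps by (intro decide_cost_bound)
qed

lemma T_decide_r_le: "T_decide_r u v \<le> 10 * (length u + length v)\<^sup>2 + 10"
proof -
  have "T_ins_word_r w [] \<le> (length w + 1)\<^sup>2" for w
    using T_ins_word_r_le[of w "[]"] by (simp add: power2_eq_square algebra_simps)
  moreover have "T_eq_tab (ins_word_r u []) (ins_word_r v []) \<le> 3 * length u + 1"
    using T_eq_tab_le[of "ins_word_r u []" "ins_word_r v []"] boxes_ins_word_r[of u "[]"]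
      length_ins_word_r_le[of u "[]"] by simp
  ultimately show ?thesis unfolding T_decide_r.simps by (intro decide_cost_bound)
qed

theorem proposition6p8:
  fixes n :: nat
  shows "\<exists>c::nat. \<forall>u v. word_over n u \<longrightarrow> word_over n v \<longrightarrow>
            (decide_r u v \<longleftrightarrow> rps_eq n u v) \<and>
            T_decide_r u v \<le> c * (length u + length v)^2 + c \<and>
            (decide_l u v \<longleftrightarrow> lps_eq n u v) \<and>
            T_decide_l u v \<le> c * (length u + length v)^2 + c"
proof (intro exI allI impI conjI)
  fix u v
  assume "word_over n u" and "word_over n v"
  then show "decide_r u v \<longleftrightarrow> rps_eq n u v" and "decide_l u v \<longleftrightarrow> lps_eq n u v"
    by (simp_all add: eq_tab_iff rps_eq_def R_r_def lps_eq_def R_l_def)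
  show "T_decide_r u v \<le> 10 * (length u + length v)^2 + 10" by (rule T_decide_r_le)
  show "T_decide_l u v \<le> 10 * (length u + length v)^2 + 10" by (rule T_decide_l_le)
qed

end
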